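(* Let $k_0\in\mathbb{R}\setminus\{0\}$ and let $z\in C^2([-1,1])$ be a complex-valued function with $z(x)\neq 0$ for all $x\in[-1,1]$ and satisfying the boundary conditions $$z'(1)-ik_0 z(1)=0,\qquad z'(-1)+ik_0 z(-1)=0 .$$ Define the complex potential $U:\mathbb{R}\to\mathbb{C}$ by $$U(x)=\frac{z''(x)+k_0^2 z(x)}{z(x)}\quad (|x|<1),\qquad U(x)=0\quad (|x|\ge 1).$$ Then the function $$\psi(x)=\begin{cases} z(x), & |x|\le 1,\\ z(\pm 1)\,e^{ik_0(|x|-1)}, & \pm x\ge 1,\end{cases}$$ is a nontrivial $C^1(\mathbb{R})$ solution of $-\psi''+U(x)\psi=k_0^2\psi$ on $|x|<1$ with $\psi(x)=\alpha_\pm e^{ik_0|x|}$ for $\pm x\ge 1$ (for constants $\alpha_\pm\in\mathbb{C}$). Consequently $M_{22}(k_0)=0$, i.e. $U$ has a spectral singularity at $k=k_0$.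
   Context: For a potential $U$ vanishing outside $[-1,1]$ and $k\in\mathbb{R}\setminus\{0\}$, consider solutions $\psi$ of $-\psi''+U(x)\psi=k^2\psi$ on $|x|<1$ (continuous with continuous derivative on $\mathbb{R}$) of the form $\psi=a_\pm e^{ikx}+b_\pm e^{-ikx}$ for $\pm x\ge 1$. The transfer matrix $M(k)=(M_{ij}(k))_{i,j=1,2}$ is the $2\times 2$ matrix defined by $(a_+,b_+)^T=M(k)(a_-,b_-)^T$. A real $k_0\neq 0$ with $M_{22}(k_0)=0$ is called a spectral singularity (it corresponds to lasing if $k_0>0$ and to coherent perfect absorption if $k_0<0$); equivalently, the problem $-\psi''+U\psi=k_0^2\psi$ on $|x|<1$, $\psi=\alpha_\pm e^{ik_0|x|}$ for $\pm x\ge 1$, has a nontrivial solution. *)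

theory Defs
  imports "HOL-Analysis.Analysis"
begin

definition schroedinger_solution ::
  "(real \<Rightarrow> complex) \<Rightarrow> real \<Rightarrow> (real \<Rightarrow> complex) \<Rightarrow> bool" where
  "schroedinger_solution U k \<psi> \<longleftrightarrow>
     (\<exists>\<psi>'. (\<forall>x. (\<psi> has_vector_derivative \<psi>' x) (at x)) \<and> continuous_on UNIV \<psi>' \<and>
       (\<forall>x. \<bar>x\<bar> < 1 \<longrightarrow>
          (\<exists>\<psi>''. (\<psi>' has_vector_derivative \<psi>'') (at x) \<and>
                 - \<psi>'' + U x * \<psi> x = complex_of_real (k^2) * \<psi> x)))"

definition is_transfer_matrix ::
  "(real \<Rightarrow> complex) \<Rightarrow> real \<Rightarrow> complex^2^2 \<Rightarrow> bool" where
  "is_transfer_matrix U k M \<longleftrightarrow>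
     (\<forall>\<psi> am bm ap bp. schroedinger_solution U k \<psi> \<and>
        (\<forall>x. x \<le> -1 \<longrightarrow> \<psi> x = am * exp (\<i> * of_real (k * x)) + bm * exp (- \<i> * of_real (k * x))) \<and>
        (\<forall>x. x \<ge> 1 \<longrightarrow> \<psi> x = ap * exp (\<i> * of_real (k * x)) + bp * exp (- \<i> * of_real (k * x)))
      \<longrightarrow> ap = M$1$1 * am + M$1$2 * bm \<and> bp = M$2$1 * am + M$2$2 * bm)"

end

theory Submission
  imports Defs
begin

text \<open>Outside \<open>[-1,1]\<close> the outgoing waves \<open>z(\<plusminus>1) exp(i k (|x| - 1))\<close> solve the free equation,
  and the boundary conditions say exactly that their derivatives at \<open>\<plusminus>1\<close> agree with \<open>z'(\<plusminus>1)\<close>.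
  Hence the glued function \<open>\<psi>\<close> is \<open>C\<^sup>1\<close>, and inside \<open>[-1,1]\<close> the potential \<open>U\<close> is chosen
  so that \<open>z\<close> solves the equation. Being purely outgoing, \<open>\<psi>\<close> has \<open>a\<^sub>- = b\<^sub>+ = 0\<close> and
  \<open>b\<^sub>- = z(-1) exp(-i k) \<noteq> 0\<close>, so \<open>b\<^sub>+ = M\<^sub>2\<^sub>1 a\<^sub>- + M\<^sub>2\<^sub>2 b\<^sub>-\<close> forces \<open>M\<^sub>2\<^sub>2 = 0\<close>.\<close>

lemma has_vector_derivative_within_closed_Un:
  fixes f :: "real \<Rightarrow> 'a::real_normed_vector"
  assumes "closed S" "closed T"
    and "x \<in> S \<Longrightarrow> (f has_vector_derivative D) (at x within S)"
    and "x \<in> T \<Longrightarrow> (f has_vector_derivative D) (at x within T)"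
  shows "(f has_vector_derivative D) (at x within S \<union> T)"
proof -
  have trivial: "(f has_vector_derivative D) (at x within A)" if "closed A" "x \<notin> A" for A
  proof -
    have "at x within A = bot"
      using not_in_closure_trivial_limitI[of x A] that by simp
    then show ?thesis
      by (simp add: has_vector_derivative_def bounded_linear_scaleR_left has_derivative_bot)
  qed
  have "(f has_vector_derivative D) (at x within S)" "(f has_vector_derivative D) (at x within T)"
    using assms trivial by blast+
  then show ?thesis
    unfolding has_vector_derivative_def has_derivative_at_within by (auto intro: Lim_Un)
qed

lemma has_vector_derivative_plane_wave:
  "((\<lambda>x. c * exp (\<i> * of_real (k * (x - x0)))) has_vector_derivative
     \<i> * of_real k * (c * exp (\<i> * of_real (k * (x - x0))))) (at x within S)"
proof -
  have "((\<lambda>x. \<i> * of_real (k * (x - x0))) has_vector_derivative \<i> * of_real k) (at x within S)"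
    by (auto intro!: derivative_eq_intros)
  from field_vector_diff_chain_within[OF this DERIV_exp[THEN has_field_derivative_at_within]]
  show ?thesis
    by (auto dest: has_vector_derivative_mult_right[of _ _ _ c] simp: o_def mult_ac)
qed

definition outgoing_extension :: "real \<Rightarrow> (real \<Rightarrow> complex) \<Rightarrow> real \<Rightarrow> complex" where
  "outgoing_extension k z x =
     (if \<bar>x\<bar> \<le> 1 then z x
      else if x \<ge> 1 then z 1 * exp (\<i> * of_real (k * (\<bar>x\<bar> - 1)))
      else z (-1) * exp (\<i> * of_real (k * (\<bar>x\<bar> - 1))))"

lemma outgoing_extension_inside: "x \<in> {-1..1} \<Longrightarrow> outgoing_extension k z x = z x"
  by (simp add: outgoing_extension_def abs_le_iff)

lemma outgoing_extension_right:
  "x \<ge> 1 \<Longrightarrow> outgoing_extension k z x = z 1 * exp (\<i> * of_real (k * (x - 1)))"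
  by (cases "x = 1") (simp_all add: outgoing_extension_def)

lemma outgoing_extension_left:
  assumes "x \<le> -1"
  shows "outgoing_extension k z x = z (-1) * exp (\<i> * of_real (- k * (x + 1)))"
proof -
  have "k * (\<bar>x\<bar> - 1) = - k * (x + 1)"
    using assms by (simp add: algebra_simps)
  with assms show ?thesis
    by (cases "x = -1") (simp_all only: outgoing_extension_def, auto)
qed

definition outgoing_extension_deriv ::
    "real \<Rightarrow> (real \<Rightarrow> complex) \<Rightarrow> (real \<Rightarrow> complex) \<Rightarrow> real \<Rightarrow> complex" where
  "outgoing_extension_deriv k z z' x =
     (if x < -1 then - \<i> * of_real k * outgoing_extension k z x
      else if x \<le> 1 then z' x
      else \<i> * of_real k * outgoing_extension k z x)"

lemma outgoing_extension_deriv_inside: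
  "x \<in> {-1..1} \<Longrightarrow> outgoing_extension_deriv k z z' x = z' x"
  by (simp add: outgoing_extension_deriv_def)

lemma outgoing_extension_deriv_right:
  assumes "z' 1 - \<i> * of_real k * z 1 = 0" and "x \<ge> 1"
  shows "outgoing_extension_deriv k z z' x = \<i> * of_real k * outgoing_extension k z x"
  using assms by (auto simp: outgoing_extension_deriv_def outgoing_extension_inside)

lemma outgoing_extension_deriv_left:
  assumes "z' (-1) + \<i> * of_real k * z (-1) = 0" and "x \<le> -1"
  shows "outgoing_extension_deriv k z z' x = - \<i> * of_real k * outgoing_extension k z x"
proof (cases "x = -1")
  case True
  have "z' (-1) = - \<i> * of_real k * z (-1)"
    using assms(1) by (simp add: eq_neg_iff_add_eq_0)
  with True show ?thesis
    by (simp add: outgoing_extension_deriv_def outgoing_extension_inside)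
qed (use assms(2) in \<open>simp add: outgoing_extension_deriv_def\<close>)

lemma has_vector_derivative_outgoing_extension:
  assumes z': "\<forall>x\<in>{-1..1}. (z has_vector_derivative z' x) (at x within {-1..1})"
    and bc_right: "z' 1 - \<i> * of_real k * z 1 = 0"
    and bc_left: "z' (-1) + \<i> * of_real k * z (-1) = 0"
  shows "(outgoing_extension k z has_vector_derivative outgoing_extension_deriv k z z' x) (at x)"
proof -
  have "(outgoing_extension k z has_vector_derivative outgoing_extension_deriv k z z' x)
      (at x within ({..-1} \<union> {-1..1}) \<union> {1..})"
  proof (intro has_vector_derivative_within_closed_Un)
    assume "x \<in> {..-1}"
    then show "(outgoing_extension k z has_vector_derivative outgoing_extension_deriv k z z' x)
        (at x within {..-1})"
      using has_vector_derivative_plane_wave[of "z (-1)" "- k" "- 1" x "{..-1}"]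
      by (intro has_vector_derivative_transform[of x, OF _ outgoing_extension_left])
        (auto simp: outgoing_extension_deriv_left[where z = z and z' = z', OF bc_left]
          outgoing_extension_left)
  next
    assume "x \<in> {-1..1}"
    then show "(outgoing_extension k z has_vector_derivative outgoing_extension_deriv k z z' x)
        (at x within {-1..1})"
      using z' by (intro has_vector_derivative_transform[of x, OF _ outgoing_extension_inside])
        (auto simp: outgoing_extension_deriv_inside)
  next
    assume "x \<in> {1..}"
    then show "(outgoing_extension k z has_vector_derivative outgoing_extension_deriv k z z' x)
        (at x within {1..})"
      using has_vector_derivative_plane_wave[of "z 1" k 1 x "{1..}"]
      by (intro has_vector_derivative_transform[of x, OF _ outgoing_extension_right])
        (auto simp: outgoing_extension_deriv_right[where z = z and z' = z', OF bc_right]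
          outgoing_extension_right)
  qed auto
  moreover have "({..-1} \<union> {-1..1}) \<union> {1..} = (UNIV :: real set)"
    by auto
  ultimately show ?thesis
    by simp
qed

lemma continuous_on_outgoing_extension_deriv:
  assumes z': "\<forall>x\<in>{-1..1}. (z has_vector_derivative z' x) (at x within {-1..1})"
    and z'_cont: "continuous_on {-1..1} z'"
    and bc_right: "z' 1 - \<i> * of_real k * z 1 = 0"
    and bc_left: "z' (-1) + \<i> * of_real k * z (-1) = 0"
  shows "continuous_on UNIV (outgoing_extension_deriv k z z')"
proof -
  have \<psi>_cont: "continuous_on S (outgoing_extension k z)" for S
    using has_vector_derivative_outgoing_extension[OF z' bc_right bc_left]
    by (intro continuous_at_imp_continuous_on) (auto intro: has_vector_derivative_continuous)
  have "continuous_on {..-1} (\<lambda>x. - \<i> * of_real k * outgoing_extension k z x)"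
    by (intro continuous_on_mult_left \<psi>_cont)
  then have left: "continuous_on {..-1} (outgoing_extension_deriv k z z')"
    by (rule continuous_on_eq)
      (simp add: outgoing_extension_deriv_left[where z = z and z' = z', OF bc_left])
  have "continuous_on {1..} (\<lambda>x. \<i> * of_real k * outgoing_extension k z x)"
    by (intro continuous_on_mult_left \<psi>_cont)
  then have right: "continuous_on {1..} (outgoing_extension_deriv k z z')"
    by (rule continuous_on_eq)
      (simp add: outgoing_extension_deriv_right[where z = z and z' = z', OF bc_right])
  have inside: "continuous_on {-1..1} (outgoing_extension_deriv k z z')"
    using z'_cont by (rule continuous_on_eq) (simp add: outgoing_extension_deriv_inside)
  have "continuous_on (({..-1} \<union> {-1..1}) \<union> {1..}) (outgoing_extension_deriv k z z')"
    using left inside right by (intro continuous_on_closed_Un) auto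
  moreover have "({..-1} \<union> {-1..1}) \<union> {1..} = (UNIV :: real set)"
    by auto
  ultimately show ?thesis
    by simp
qed

lemma outgoing_extension_far_right:
  assumes "x \<ge> 1"
  shows "outgoing_extension k z x = z 1 * exp (- \<i> * of_real k) * exp (\<i> * of_real (k * x))"
proof -
  have "exp (\<i> * of_real (k * (x - 1))) = exp (- \<i> * of_real k) * exp (\<i> * of_real (k * x))"
    by (simp add: exp_add[symmetric] algebra_simps)
  with assms show ?thesis
    by (simp add: outgoing_extension_right)
qed

lemma outgoing_extension_far_left:
  assumes "x \<le> -1"
  shows "outgoing_extension k z x = z (-1) * exp (- \<i> * of_real k) * exp (- \<i> * of_real (k * x))"
proof -
  have "exp (\<i> * of_real (- k * (x + 1))) = exp (- \<i> * of_real k) * exp (- \<i> * of_real (k * x))"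
    by (simp add: exp_add[symmetric] algebra_simps)
  with assms show ?thesis
    by (simp add: outgoing_extension_left)
qed

lemma schroedinger_solution_outgoing_extension:
  assumes z': "\<forall>x\<in>{-1..1}. (z has_vector_derivative z' x) (at x within {-1..1})"
    and z'_cont: "continuous_on {-1..1} z'"
    and z'': "\<forall>x\<in>{-1<..<1}. (z' has_vector_derivative z'' x) (at x)"
    and z_nonzero: "\<forall>x\<in>{-1<..<1}. z x \<noteq> 0"
    and bc_right: "z' 1 - \<i> * of_real k * z 1 = 0"
    and bc_left: "z' (-1) + \<i> * of_real k * z (-1) = 0"
  shows "schroedinger_solution (\<lambda>x. if \<bar>x\<bar> < 1 then (z'' x + of_real (k^2) * z x) / z x else 0) k
           (outgoing_extension k z)"
  unfolding schroedinger_solution_def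
proof (intro exI[of _ "outgoing_extension_deriv k z z'"] conjI allI impI
    has_vector_derivative_outgoing_extension continuous_on_outgoing_extension_deriv assms)
  fix x :: real
  assume "\<bar>x\<bar> < 1"
  then have x: "x \<in> {-1<..<1}"
    by (simp add: abs_less_iff)
  have "(z' has_vector_derivative z'' x) (at x)"
    using z'' x by blast
  then have "(outgoing_extension_deriv k z z' has_vector_derivative z'' x) (at x)"
    by (rule has_vector_derivative_transform_within_open[OF _ open_greaterThanLessThan x])
      (simp add: outgoing_extension_deriv_inside)
  moreover have "outgoing_extension k z x = z x"
    using x by (simp add: outgoing_extension_inside)
  moreover have "z x \<noteq> 0"
    using z_nonzero x by blast
  ultimately show "\<exists>\<psi>''. (outgoing_extension_deriv k z z' has_vector_derivative \<psi>'') (at x) \<and>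
      - \<psi>'' + (if \<bar>x\<bar> < 1 then (z'' x + of_real (k^2) * z x) / z x else 0) * outgoing_extension k z x
        = of_real (k^2) * outgoing_extension k z x"
    using \<open>\<bar>x\<bar> < 1\<close> by (intro exI[of _ "z'' x"]) simp
qed

lemma transfer_matrix_22_eq_0_if_outgoing:
  assumes M: "is_transfer_matrix U k M" and sol: "schroedinger_solution U k \<psi>"
    and right: "\<forall>x. x \<ge> 1 \<longrightarrow> \<psi> x = \<alpha>p * exp (\<i> * of_real (k * x))"
    and left: "\<forall>x. x \<le> -1 \<longrightarrow> \<psi> x = \<alpha>m * exp (- \<i> * of_real (k * x))"
    and "\<alpha>m \<noteq> 0"
  shows "M$2$2 = 0"
proof -
  have "0 = M$2$1 * 0 + M$2$2 * \<alpha>m"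
    using M[unfolded is_transfer_matrix_def, rule_format, of \<psi> 0 \<alpha>m \<alpha>p 0] sol left right by simp
  with \<open>\<alpha>m \<noteq> 0\<close> show ?thesis
    by simp
qed

theorem mainTheorem1:
  fixes k0 :: real and z z' z'' :: "real \<Rightarrow> complex"
    and U \<psi> :: "real \<Rightarrow> complex"
  assumes k0: "k0 \<noteq> 0"
    and z1: "\<forall>x\<in>{-1..1}. (z has_vector_derivative z' x) (at x within {-1..1})"
    and z2: "\<forall>x\<in>{-1..1}. (z' has_vector_derivative z'' x) (at x within {-1..1})"
    and z2c: "continuous_on {-1..1} z''"
    and znz: "\<forall>x\<in>{-1..1}. z x \<noteq> 0"
    and bc1: "z' 1 - \<i> * of_real k0 * z 1 = 0"
    and bc2: "z' (-1) + \<i> * of_real k0 * z (-1) = 0"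
    and U_def: "U = (\<lambda>x. if \<bar>x\<bar> < 1 then (z'' x + of_real (k0^2) * z x) / z x else 0)"
    and \<psi>_def: "\<psi> = (\<lambda>x. if \<bar>x\<bar> \<le> 1 then z x
                   else if x \<ge> 1 then z 1 * exp (\<i> * of_real (k0 * (\<bar>x\<bar> - 1)))
                   else z (-1) * exp (\<i> * of_real (k0 * (\<bar>x\<bar> - 1))))"
  shows "schroedinger_solution U k0 \<psi> \<and> (\<exists>x. \<psi> x \<noteq> 0) \<and>
         (\<exists>\<alpha>p \<alpha>m. (\<forall>x. x \<ge> 1 \<longrightarrow> \<psi> x = \<alpha>p * exp (\<i> * of_real (k0 * \<bar>x\<bar>))) \<and>
                  (\<forall>x. x \<le> -1 \<longrightarrow> \<psi> x = \<alpha>m * exp (\<i> * of_real (k0 * \<bar>x\<bar>)))) \<and>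
         (\<forall>M. is_transfer_matrix U k0 M \<longrightarrow> M$2$2 = 0)"
proof -
  have \<psi>_eq: "\<psi> = outgoing_extension k0 z"
    by (simp add: \<psi>_def outgoing_extension_def fun_eq_iff)
  have z'_cont: "continuous_on {-1..1} z'"
    using z2 by (intro continuous_on_vector_derivative[of _ _ z'']) simp
  have z'': "\<forall>x\<in>{-1<..<1}. (z' has_vector_derivative z'' x) (at x)"
    using z2 by (metis at_within_Icc_at greaterThanLessThan_iff atLeastAtMost_iff less_imp_le)
  have sol: "schroedinger_solution U k0 \<psi>"
    unfolding U_def \<psi>_eq using znz
    by (intro schroedinger_solution_outgoing_extension[OF z1 z'_cont z'' _ bc1 bc2]) simp
  define \<alpha>p \<alpha>m where "\<alpha>p = z 1 * exp (- \<i> * of_real k0)" and "\<alpha>m = z (-1) * exp (- \<i> * of_real k0)"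
  have right: "\<forall>x. x \<ge> 1 \<longrightarrow> \<psi> x = \<alpha>p * exp (\<i> * of_real (k0 * x))"
    by (simp add: \<psi>_eq \<alpha>p_def outgoing_extension_far_right)
  have left: "\<forall>x. x \<le> -1 \<longrightarrow> \<psi> x = \<alpha>m * exp (- \<i> * of_real (k0 * x))"
    by (simp add: \<psi>_eq \<alpha>m_def outgoing_extension_far_left)
  have "\<psi> 0 \<noteq> 0" and "\<alpha>m \<noteq> 0"
    using znz by (simp_all add: \<psi>_eq \<alpha>m_def outgoing_extension_inside)
  moreover have "\<forall>M. is_transfer_matrix U k0 M \<longrightarrow> M$2$2 = 0"
    using transfer_matrix_22_eq_0_if_outgoing[OF _ sol right left \<open>\<alpha>m \<noteq> 0\<close>] by blast
  moreover have "(\<forall>x. x \<ge> 1 \<longrightarrow> \<psi> x = \<alpha>p * exp (\<i> * of_real (k0 * \<bar>x\<bar>))) \<and>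
                 (\<forall>x. x \<le> -1 \<longrightarrow> \<psi> x = \<alpha>m * exp (\<i> * of_real (k0 * \<bar>x\<bar>)))"
    using right left by auto
  ultimately show ?thesis
    using sol by blast
qed

end
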